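(* The dimension of the vector space $\mathcal{D}\cap (I_{\mathcal{C}})_2$ is $d-3$.
   Context: Let $P_d$ be a convex polygon with $d\ge 4$ vertices $v_1,\dots,v_d$ (indices mod $d$) over a field $\mathbb{K}$ with no three edge lines concurrent, and ${\bf v}_i=(v_i,1)\in\mathbb{K}^3$. In $S=\mathbb{K}[x_1,\ldots,x_d]$ let $\tau=\sum_i x_i{\bf v}_i=(\tau_1,\tau_2,\tau_3)$, $\mathcal{C}=\mathbb{V}(\tau_1,\tau_2,\tau_3)$ with ideal $I_{\mathcal{C}}=\langle\tau_1,\tau_2,\tau_3\rangle$, and $\mathcal{D}\subseteq S_2$ the span of diagonal monomials $x_ix_j$, $j\notin\{i-1,i,i+1\}$. *)

theory Defs
  imports "HOL-Analysis.Analysis" "HOL-Library.Function_Algebras"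
begin

(* Polygon with d vertices v 0, ..., v (d-1) in K^2 (indices mod d).  A linear form is a coefficient function
   nat => 'a (coefficient of x_i), a quadratic form is a coefficient function
   nat * nat => 'a, where (i,j) with i <= j stands for the monomial x_i x_j. *)

definition cross2 :: "'a::linordered_field \<times> 'a \<Rightarrow> 'a \<times> 'a \<Rightarrow> 'a" where
  "cross2 p q = fst p * snd q - snd p * fst q"

definition convex_polygon :: "nat \<Rightarrow> (nat \<Rightarrow> 'a::linordered_field \<times> 'a) \<Rightarrow> bool" where
  "convex_polygon d v \<longleftrightarrow> d \<ge> 3 \<and>
     ((\<forall>i<d. \<forall>k<d. k \<noteq> i \<and> k \<noteq> (i+1) mod d \<longrightarrow>
         cross2 (v ((i+1) mod d) - v i) (v k - v i) > 0) \<or>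
      (\<forall>i<d. \<forall>k<d. k \<noteq> i \<and> k \<noteq> (i+1) mod d \<longrightarrow>
         cross2 (v ((i+1) mod d) - v i) (v k - v i) < 0))"

definition on_edge_line :: "nat \<Rightarrow> (nat \<Rightarrow> 'a::linordered_field \<times> 'a) \<Rightarrow> nat \<Rightarrow> 'a \<times> 'a \<Rightarrow> bool" where
  "on_edge_line d v i p \<longleftrightarrow> cross2 (v ((i+1) mod d) - v i) (p - v i) = 0"

definition no_three_edge_lines_concurrent :: "nat \<Rightarrow> (nat \<Rightarrow> 'a::linordered_field \<times> 'a) \<Rightarrow> bool" where
  "no_three_edge_lines_concurrent d v \<longleftrightarrow>
     (\<forall>i<d. \<forall>j<d. \<forall>k<d. i \<noteq> j \<and> i \<noteq> k \<and> j \<noteq> k \<longrightarrow>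
        \<not> (\<exists>p. on_edge_line d v i p \<and> on_edge_line d v j p \<and> on_edge_line d v k p))"

definition lin_forms :: "nat \<Rightarrow> (nat \<Rightarrow> 'a::field) set" where
  "lin_forms d = {l. \<forall>i. i \<ge> d \<longrightarrow> l i = 0}"

definition lin_mult :: "(nat \<Rightarrow> 'a::field) \<Rightarrow> (nat \<Rightarrow> 'a) \<Rightarrow> nat \<times> nat \<Rightarrow> 'a" where
  "lin_mult l m = (\<lambda>(i,j). if i < j then l i * m j + l j * m i
                           else if i = j then l i * m i else 0)"

(* tau = sum_i x_i (v_i, 1) *)
definition tau1 :: "nat \<Rightarrow> (nat \<Rightarrow> 'a::linordered_field \<times> 'a) \<Rightarrow> nat \<Rightarrow> 'a" where
  "tau1 d v = (\<lambda>i. if i < d then fst (v i) else 0)"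
definition tau2 :: "nat \<Rightarrow> (nat \<Rightarrow> 'a::linordered_field \<times> 'a) \<Rightarrow> nat \<Rightarrow> 'a" where
  "tau2 d v = (\<lambda>i. if i < d then snd (v i) else 0)"
definition tau3 :: "nat \<Rightarrow> nat \<Rightarrow> 'a::linordered_field" where
  "tau3 d = (\<lambda>i. if i < d then 1 else 0)"

(* degree-2 part of the ideal I_C = <tau1, tau2, tau3> *)
definition IC2 :: "nat \<Rightarrow> (nat \<Rightarrow> 'a::linordered_field \<times> 'a) \<Rightarrow> (nat \<times> nat \<Rightarrow> 'a) set" where
  "IC2 d v = {q. \<exists>l1 \<in> lin_forms d. \<exists>l2 \<in> lin_forms d. \<exists>l3 \<in> lin_forms d.
      q = lin_mult l1 (tau1 d v) + lin_mult l2 (tau2 d v) + lin_mult l3 (tau3 d)}"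

(* x_i x_j (i < j) is a diagonal monomial iff j is not i-1, i, i+1 mod d *)
definition diag_pair :: "nat \<Rightarrow> nat \<times> nat \<Rightarrow> bool" where
  "diag_pair d ij \<longleftrightarrow> (case ij of (i,j) \<Rightarrow>
      i < j \<and> j < d \<and> j \<noteq> i + 1 \<and> \<not> (i = 0 \<and> j = d - 1))"

definition Dspace :: "nat \<Rightarrow> (nat \<times> nat \<Rightarrow> 'a::field) set" where
  "Dspace d = {q. \<forall>ij. \<not> diag_pair d ij \<longrightarrow> q ij = 0}"

definition fscale :: "'a::field \<Rightarrow> ('b \<Rightarrow> 'a) \<Rightarrow> 'b \<Rightarrow> 'a" where
  "fscale c f = (\<lambda>x. c * f x)"

lemma vector_space_fscale: "vector_space (fscale :: 'a::field \<Rightarrow> ('b \<Rightarrow> 'a) \<Rightarrow> _)"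
  by unfold_locales (auto simp: fscale_def algebra_simps fun_eq_iff)

end

theory Submission
  imports Defs
begin

text \<open>Write \<open>e\<^sub>k = v\<^sub>k\<^sub>+\<^sub>1 - v\<^sub>k\<close> for the edges and \<open>det\<close> for the planar cross product. A quadric
  \<open>l\<^sub>1\<tau>\<^sub>1 + l\<^sub>2\<tau>\<^sub>2 + l\<^sub>3\<tau>\<^sub>3\<close> without square terms is determined by the plane vectors
  \<open>L\<^sub>j = (l\<^sub>2(j), -l\<^sub>1(j))\<close>: its \<open>x\<^sub>ix\<^sub>j\<close> coefficient is \<open>det(L\<^sub>i - L\<^sub>j, v\<^sub>j - v\<^sub>i)\<close>. The coefficients
  of the edge monomials \<open>x\<^sub>kx\<^sub>k\<^sub>+\<^sub>1\<close> vanish iff \<open>L\<^sub>k - L\<^sub>k\<^sub>+\<^sub>1 = t\<^sub>k e\<^sub>k\<close> for some weights \<open>t\<close>, which are then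
  closed: \<open>\<Sum> t\<^sub>k e\<^sub>k = 0\<close>. Hence \<open>D \<inter> (I\<^sub>C)\<^sub>2\<close> is the image of the \<open>(d - 2)\<close>-dimensional space of closed
  weights under \<open>t \<mapsto> (\<Sum>\<^bsub>i \<le> m < j\<^esub> t\<^sub>m det(e\<^sub>m, v\<^sub>j - v\<^sub>i))\<^sub>i\<^sub>j\<close>. By strict convexity the short
  diagonals \<open>x\<^sub>kx\<^sub>k\<^sub>+\<^sub>2\<close> force every weight in the kernel to be constant, so the dimension is \<open>d - 3\<close>.\<close>

definition scale2 :: "'a::ring_1 \<Rightarrow> 'a \<times> 'a \<Rightarrow> 'a \<times> 'a" where
  "scale2 c p = (c * fst p, c * snd p)"

lemma scale2_one [simp]: "scale2 1 p = p"
  by (simp add: scale2_def)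

lemma scale2_zero_right [simp]: "scale2 c 0 = 0"
  by (simp add: scale2_def zero_prod_def)

lemma cross2_self [simp]: "cross2 p p = 0"
  by (simp add: cross2_def mult.commute)

lemma cross2_diff_swap [simp]: "cross2 (p - q) (q - p) = 0"
  by (simp add: cross2_def algebra_simps)

lemma cross2_diff_left: "cross2 (p - q) r = cross2 p r - cross2 q r"
  by (simp add: cross2_def algebra_simps)

lemma cross2_diff_right: "cross2 p (q - r) = cross2 p q - cross2 p r"
  by (simp add: cross2_def algebra_simps)

lemma cross2_minus_left: "cross2 (- p) q = - cross2 p q"
  by (simp add: cross2_def)

lemma cross2_scale2_left: "cross2 (scale2 c p) q = c * cross2 p q"
  by (simp add: cross2_def scale2_def algebra_simps)

lemma cross2_sum_left: "cross2 (\<Sum>a\<in>A. f a) q = (\<Sum>a\<in>A. cross2 (f a) q)"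
  by (simp add: cross2_def fst_sum snd_sum sum_distrib_right sum_subtractf)

lemma cross2_eq_0_imp_parallel:
  assumes "p \<noteq> 0" and "cross2 q p = 0"
  obtains c where "q = scale2 c p"
proof (cases "fst p = 0")
  case True
  then have "snd p \<noteq> 0" using assms(1) by (simp add: prod_eq_iff)
  with True assms(2) show ?thesis
    by (intro that[of "snd q / snd p"]) (auto simp: cross2_def scale2_def prod_eq_iff)
next
  case False
  with assms(2) show ?thesis
    by (intro that[of "fst q / fst p"]) (auto simp: cross2_def scale2_def prod_eq_iff field_simps)
qed

lemma planar_cramer:
  assumes "cross2 p q \<noteq> 0"
  shows "scale2 (cross2 r q / cross2 p q) p + scale2 (cross2 p r / cross2 p q) q = r"
proof -
  have "cross2 r q * fst p + cross2 p r * fst q = fst r * cross2 p q"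
       "cross2 r q * snd p + cross2 p r * snd q = snd r * cross2 p q"
    by (simp_all add: cross2_def algebra_simps)
  with assms show ?thesis by (simp add: scale2_def prod_eq_iff field_simps)
qed

lemma scale2_independent:
  assumes "cross2 p q \<noteq> 0" and "scale2 a p + scale2 b q = 0"
  shows "a = 0" and "b = 0"
proof -
  have "a * cross2 p q = cross2 (scale2 a p + scale2 b q) q"
       "b * cross2 p q = cross2 p (scale2 a p + scale2 b q)"
    by (simp_all add: cross2_def scale2_def algebra_simps)
  then have "a * cross2 p q = 0" "b * cross2 p q = 0"
    unfolding assms(2) by (simp_all add: cross2_def)
  with assms(1) show "a = 0" "b = 0" by simp_all
qed

lemma sum_fun_apply: "(\<Sum>a\<in>A. f a) x = (\<Sum>a\<in>A. f a x)"
  by (induction A rule: infinite_finite_induct) auto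

lemma sum_lessThan_telescope_mod:
  fixes f :: "nat \<Rightarrow> 'a::ab_group_add"
  assumes "0 < d"
  shows "(\<Sum>k<d. f (Suc k mod d) - f k) = 0"
proof -
  obtain n where n: "d = Suc n" using assms by (cases d) auto
  have "(\<Sum>k<d. f (Suc k mod d) - f k) = (\<Sum>k<n. f (Suc k) - f k) + (f 0 - f n)"
    by (simp add: n)
  also have "(\<Sum>k<n. f (Suc k) - f k) = f n - f 0" by (rule sum_lessThan_telescope)
  finally show ?thesis by simp
qed

definition edge :: "nat \<Rightarrow> (nat \<Rightarrow> 'a::linordered_field \<times> 'a) \<Rightarrow> nat \<Rightarrow> 'a \<times> 'a" where
  "edge d v k = v (Suc k mod d) - v k"

lemma sum_edge_interval:
  assumes "i \<le> j" and "j < d"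
  shows "(\<Sum>m=i..<j. edge d v m) = v j - v i"
proof -
  have "(\<Sum>m=i..<j. edge d v m) = (\<Sum>m=i..<j. v (Suc m) - v m)"
    using assms(2) by (intro sum.cong) (auto simp: edge_def)
  also have "\<dots> = v j - v i" using assms(1) by (rule sum_Suc_diff')
  finally show ?thesis .
qed

lemma sum_edge_cycle: "0 < d \<Longrightarrow> (\<Sum>k<d. edge d v k) = 0"
  unfolding edge_def by (rule sum_lessThan_telescope_mod)

lemma convex_polygon_cross2_edge:
  assumes "convex_polygon d v" "i < d" "k < d" "k \<noteq> i" "k \<noteq> Suc i mod d"
  shows "cross2 (edge d v i) (v k - v i) \<noteq> 0"
  using assms unfolding convex_polygon_def edge_def by (metis Suc_eq_plus1 less_irrefl)

lemma convex_polygon_edge_nonzero: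
  assumes conv: "convex_polygon d v" and k: "k < d"
  shows "edge d v k \<noteq> 0"
proof -
  have "d \<ge> 3" using conv by (simp add: convex_polygon_def)
  then have "Suc (Suc k) mod d < d" "Suc (Suc k) mod d \<noteq> k" "Suc (Suc k) mod d \<noteq> Suc k mod d"
    using k by (auto simp: mod_Suc)
  from convex_polygon_cross2_edge[OF conv k this] show ?thesis by (auto simp: cross2_def)
qed

lemma convex_polygon_cross2_consecutive_edges:
  assumes conv: "convex_polygon d v" and k: "Suc k < d"
  shows "cross2 (edge d v k) (edge d v (Suc k)) \<noteq> 0"
proof -
  have d3: "d \<ge> 3" using conv by (simp add: convex_polygon_def)
  define n where "n = Suc (Suc k) mod d"
  have n: "n < d" "n \<noteq> k" "n \<noteq> Suc k mod d"
    using d3 k by (auto simp: n_def mod_Suc)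
  have "edge d v (Suc k) = (v n - v k) - edge d v k"
    using k by (simp add: edge_def n_def)
  then have "cross2 (edge d v k) (edge d v (Suc k)) = cross2 (edge d v k) (v n - v k)"
    by (simp add: cross2_diff_right)
  with convex_polygon_cross2_edge[OF conv _ n] k show ?thesis by simp
qed

definition edge_sum :: "nat \<Rightarrow> (nat \<Rightarrow> 'a::linordered_field \<times> 'a) \<Rightarrow> (nat \<Rightarrow> 'a) \<Rightarrow> nat set \<Rightarrow> 'a \<times> 'a"
  where "edge_sum d v t A = (\<Sum>m\<in>A. scale2 (t m) (edge d v m))"

definition closed_weights :: "nat \<Rightarrow> (nat \<Rightarrow> 'a::linordered_field \<times> 'a) \<Rightarrow> (nat \<Rightarrow> 'a) \<Rightarrow> bool"
  where "closed_weights d v t \<longleftrightarrow> edge_sum d v t {..<d} = 0"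

definition diag_form :: "nat \<Rightarrow> (nat \<Rightarrow> 'a::linordered_field \<times> 'a) \<Rightarrow> (nat \<Rightarrow> 'a) \<Rightarrow> nat \<times> nat \<Rightarrow> 'a"
  where "diag_form d v t = (\<lambda>(i,j). if diag_pair d (i,j)
           then \<Sum>m=i..<j. t m * cross2 (edge d v m) (v j - v i) else 0)"

lemma cross2_edge_sum_left:
  "cross2 (edge_sum d v t A) w = (\<Sum>m\<in>A. t m * cross2 (edge d v m) w)"
  by (simp add: edge_sum_def cross2_sum_left cross2_scale2_left)

lemma edge_sum_diff:
  "edge_sum d v (\<lambda>m. t m - s m) A = edge_sum d v t A - edge_sum d v s A"
  by (simp add: edge_sum_def scale2_def sum_subtractf[symmetric] algebra_simps)

lemma edge_sum_lincomb:
  "edge_sum d v (\<lambda>m. \<Sum>k\<in>K. c k * b k m) A = (\<Sum>k\<in>K. scale2 (c k) (edge_sum d v (b k) A))"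
  by (simp add: edge_sum_def scale2_def prod_eq_iff fst_sum snd_sum sum_distrib_left
      sum_distrib_right mult.assoc) (simp_all add: sum.swap[of _ A])

lemma edge_sum_split: "i \<le> j \<Longrightarrow> edge_sum d v t {..<j} = edge_sum d v t {..<i} + edge_sum d v t {i..<j}"
  unfolding edge_sum_def lessThan_atLeast0
  using sum.atLeastLessThan_concat[of 0 i j "\<lambda>m. scale2 (t m) (edge d v m)"] by simp

lemma edge_sum_mono_neutral:
  "finite A \<Longrightarrow> S \<subseteq> A \<Longrightarrow> (\<And>m. m \<in> A - S \<Longrightarrow> t m = 0) \<Longrightarrow> edge_sum d v t A = edge_sum d v t S"
  unfolding edge_sum_def by (rule sum.mono_neutral_right) (auto simp: scale2_def zero_prod_def)

lemma closed_weights_const: "0 < d \<Longrightarrow> closed_weights d v (\<lambda>_. c)"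
  using sum_edge_cycle[of d v]
  by (simp add: closed_weights_def edge_sum_def scale2_def prod_eq_iff fst_sum snd_sum
      sum_distrib_left[symmetric])

lemma diag_form_in_Dspace: "diag_form d v t \<in> Dspace d"
  by (simp add: Dspace_def diag_form_def)

lemma diag_form_lincomb:
  "diag_form d v (\<lambda>m. \<Sum>k\<in>K. c k * b k m) = (\<Sum>k\<in>K. fscale (c k) (diag_form d v (b k)))"
  by (rule ext) (auto simp: diag_form_def sum_fun_apply fscale_def sum_distrib_left
      sum_distrib_right mult.assoc intro: sum.swap)

lemma diag_form_cong: "(\<And>m. m < d \<Longrightarrow> t m = s m) \<Longrightarrow> diag_form d v t = diag_form d v s"
  by (rule ext) (auto simp: diag_form_def diag_pair_def intro!: sum.cong)

lemma diag_form_shift: "diag_form d v (\<lambda>m. t m - c) = diag_form d v t"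
proof (rule ext, clarify)
  fix i j
  have "(\<Sum>m=i..<j. cross2 (edge d v m) (v j - v i)) = 0" if "diag_pair d (i,j)"
    using that sum_edge_interval[of i j d v]
    by (simp add: diag_pair_def cross2_sum_left[symmetric])
  then show "diag_form d v (\<lambda>m. t m - c) (i, j) = diag_form d v t (i, j)"
    by (simp add: diag_form_def left_diff_distrib sum_subtractf sum_distrib_left[symmetric])
qed

text \<open>The quadric \<open>l\<^sub>1\<tau>\<^sub>1 + l\<^sub>2\<tau>\<^sub>2 + l\<^sub>3\<tau>\<^sub>3\<close> with \<open>L\<^sub>j = (l\<^sub>2(j), -l\<^sub>1(j))\<close> and \<open>l\<^sub>3\<close> chosen to kill the
  square terms.\<close>
definition cross_form :: "nat \<Rightarrow> (nat \<Rightarrow> 'a::linordered_field \<times> 'a) \<Rightarrow> (nat \<Rightarrow> 'a \<times> 'a) \<Rightarrow> nat \<times> nat \<Rightarrow> 'a"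
  where "cross_form d v L = (\<lambda>(i,j). if i < j \<and> j < d then cross2 (L i - L j) (v j - v i) else 0)"

lemma cross_form_in_IC2: "cross_form d v L \<in> IC2 d v"
proof -
  define l1 where "l1 j = (if j < d then - snd (L j) else 0)" for j
  define l2 where "l2 j = (if j < d then fst (L j) else 0)" for j
  define l3 where "l3 j = - (l1 j * fst (v j) + l2 j * snd (v j))" for j
  have "l1 \<in> lin_forms d" "l2 \<in> lin_forms d" "l3 \<in> lin_forms d"
    by (simp_all add: lin_forms_def l1_def l2_def l3_def)
  moreover have "cross_form d v L = lin_mult l1 (tau1 d v) + lin_mult l2 (tau2 d v) + lin_mult l3 (tau3 d)"
  proof (rule ext, clarify)
    fix i j
    consider "i < j" "j < d" | "i < j" "d \<le> j" | "i = j" | "j < i" by linarith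
    then show "cross_form d v L (i,j)
        = (lin_mult l1 (tau1 d v) + lin_mult l2 (tau2 d v) + lin_mult l3 (tau3 d)) (i,j)"
      by cases (simp_all add: cross_form_def lin_mult_def l1_def l2_def l3_def tau1_def
          tau2_def tau3_def cross2_def algebra_simps)
  qed
  ultimately show ?thesis unfolding IC2_def by blast
qed

lemma IC2_imp_cross_form:
  assumes "q \<in> IC2 d v" and "\<And>i. i < d \<Longrightarrow> q (i,i) = 0"
  obtains L where "q = cross_form d v L"
proof -
  obtain l1 l2 l3 where l: "l1 \<in> lin_forms d" "l2 \<in> lin_forms d" "l3 \<in> lin_forms d"
    and q: "q = lin_mult l1 (tau1 d v) + lin_mult l2 (tau2 d v) + lin_mult l3 (tau3 d)"
    using assms(1) unfolding IC2_def by blast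
  have l3: "l3 i = - (l1 i * fst (v i) + l2 i * snd (v i))" if "i < d" for i
    using assms(2)[OF that] that
    by (simp add: q lin_mult_def tau1_def tau2_def tau3_def algebra_simps)
  have "q (i,j) = cross_form d v (\<lambda>j. (l2 j, - l1 j)) (i,j)" for i j
  proof -
    consider "i < j" "j < d" | "i < j" "d \<le> j" | "i = j" "j < d" | "i = j" "d \<le> j" | "j < i"
      by linarith
    then show ?thesis
      using l by cases (simp_all add: q cross_form_def lin_mult_def tau1_def tau2_def tau3_def
          lin_forms_def l3 cross2_def algebra_simps)
  qed
  then have "q = cross_form d v (\<lambda>j. (l2 j, - l1 j))" by auto
  then show ?thesis by (rule that)
qed

lemma diag_form_eq_cross_form:
  assumes "closed_weights d v t"
  shows "diag_form d v t = cross_form d v (\<lambda>j. - edge_sum d v t {..<j})"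
proof (rule ext, clarify)
  fix i j
  show "diag_form d v t (i,j) = cross_form d v (\<lambda>j. - edge_sum d v t {..<j}) (i,j)"
  proof (cases "i < j \<and> j < d")
    case True
    then have cf: "cross_form d v (\<lambda>j. - edge_sum d v t {..<j}) (i,j)
        = (\<Sum>m=i..<j. t m * cross2 (edge d v m) (v j - v i))"
      by (simp add: cross_form_def edge_sum_split[of i j] cross2_edge_sum_left)
    show ?thesis
    proof (cases "diag_pair d (i,j)")
      case True
      then show ?thesis by (simp add: cf diag_form_def)
    next
      case False
      with \<open>i < j \<and> j < d\<close> consider "j = Suc i" | "i = 0" "d = Suc j"
        by (auto simp: diag_pair_def)
      then show ?thesis
      proof cases
        case 1
        with cf False True show ?thesis by (simp add: diag_form_def edge_def)
      next
        case 2
        have "edge_sum d v t {..<d} = edge_sum d v t {0..<j} + scale2 (t j) (edge d v j)"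
          by (simp add: edge_sum_def \<open>d = Suc j\<close> atLeast0LessThan)
        then have "edge_sum d v t {0..<j} = - scale2 (t j) (edge d v j)"
          using assms by (simp add: closed_weights_def eq_neg_iff_add_eq_0)
        moreover have "edge d v j = v 0 - v j" by (simp add: edge_def \<open>d = Suc j\<close>)
        ultimately have "cross2 (edge_sum d v t {0..<j}) (v j - v 0) = 0"
          by (simp add: cross2_scale2_left cross2_minus_left)
        with cf False 2 show ?thesis by (simp add: diag_form_def cross2_edge_sum_left)
      qed
    qed
  next
    case False
    then show ?thesis by (auto simp: diag_form_def cross_form_def diag_pair_def)
  qed
qed

lemma cross_form_in_Dspace_imp_diag_form:
  assumes conv: "convex_polygon d v" and D: "cross_form d v L \<in> Dspace d"
  obtains t where "closed_weights d v t" and "cross_form d v L = diag_form d v t"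
proof -
  have d3: "d \<ge> 3" using conv by (simp add: convex_polygon_def)
  have zero: "cross_form d v L (i,j) = 0" if "\<not> diag_pair d (i,j)" for i j
    using D that by (simp add: Dspace_def)
  have "cross2 (L k - L (Suc k mod d)) (edge d v k) = 0" if "k < d" for k
  proof (cases "Suc k < d")
    case True
    then show ?thesis using zero[of k "Suc k"] by (simp add: diag_pair_def cross_form_def edge_def)
  next
    case False
    with that have "d = Suc k" by simp
    moreover have "cross2 (L (d-1) - L 0) (v 0 - v (d-1)) = cross2 (L 0 - L (d-1)) (v (d-1) - v 0)"
      by (simp add: cross2_def algebra_simps)
    ultimately show ?thesis using zero[of 0 "d-1"] d3 by (simp add: diag_pair_def cross_form_def edge_def)
  qed
  then have "\<forall>k. \<exists>c. k < d \<longrightarrow> L k - L (Suc k mod d) = scale2 c (edge d v k)"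
    using convex_polygon_edge_nonzero[OF conv] cross2_eq_0_imp_parallel by metis
  then obtain t where t: "\<And>k. k < d \<Longrightarrow> L k - L (Suc k mod d) = scale2 (t k) (edge d v k)"
    by metis
  have interval: "edge_sum d v t {i..<j} = L i - L j" if "i \<le> j" "j < d" for i j
  proof -
    have "edge_sum d v t {i..<j} = (\<Sum>m=i..<j. (- L (Suc m)) - (- L m))"
      unfolding edge_sum_def using that by (intro sum.cong) (auto simp: t[symmetric])
    then show ?thesis using sum_Suc_diff'[OF that(1), of "\<lambda>m. - L m"] by simp
  qed
  have "edge_sum d v t {..<d} = - (\<Sum>k<d. L (Suc k mod d) - L k)"
    unfolding edge_sum_def sum_negf[symmetric] by (intro sum.cong) (auto simp: t[symmetric])
  then have "closed_weights d v t"
    using sum_lessThan_telescope_mod[of d L] d3 by (simp add: closed_weights_def)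
  moreover have "cross_form d v L = diag_form d v t"
  proof (rule ext, clarify)
    fix i j
    show "cross_form d v L (i,j) = diag_form d v t (i,j)"
    proof (cases "diag_pair d (i,j)")
      case True
      then have "i \<le> j" "j < d" by (auto simp: diag_pair_def)
      with True show ?thesis
        by (simp add: cross_form_def diag_form_def interval[symmetric] cross2_edge_sum_left)
    qed (simp add: zero diag_form_def)
  qed
  ultimately show ?thesis by (rule that)
qed

lemma Dspace_inter_IC2_eq:
  assumes "convex_polygon d v"
  shows "Dspace d \<inter> IC2 d v = diag_form d v ` {t. closed_weights d v t}"
proof
  show "Dspace d \<inter> IC2 d v \<subseteq> diag_form d v ` {t. closed_weights d v t}"
  proof
    fix q assume q: "q \<in> Dspace d \<inter> IC2 d v"
    moreover have "q (i,i) = 0" for i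
      using q by (simp add: Dspace_def diag_pair_def)
    ultimately obtain L where L: "q = cross_form d v L"
      using IC2_imp_cross_form by blast
    with q assms obtain t where "closed_weights d v t" "q = diag_form d v t"
      using cross_form_in_Dspace_imp_diag_form by blast
    then show "q \<in> diag_form d v ` {t. closed_weights d v t}" by blast
  qed
next
  show "diag_form d v ` {t. closed_weights d v t} \<subseteq> Dspace d \<inter> IC2 d v"
    using diag_form_in_Dspace diag_form_eq_cross_form cross_form_in_IC2 by fastforce
qed

lemma diag_form_zero_imp_const:
  assumes conv: "convex_polygon d v" and d4: "d \<ge> 4" and zero: "diag_form d v t = 0"
  shows "m \<le> d - 2 \<Longrightarrow> t m = t 0"
proof (induction m)
  case (Suc k)
  then have k: "Suc (Suc k) < d" using d4 by simp
  define w where "w = v (Suc (Suc k)) - v k"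
  have edge_next: "edge d v (Suc k) = w - edge d v k"
    using k by (simp add: w_def edge_def)
  have "diag_pair d (k, Suc (Suc k))" using k d4 by (auto simp: diag_pair_def)
  then have "diag_form d v t (k, Suc (Suc k))
      = t k * cross2 (edge d v k) w + t (Suc k) * cross2 (edge d v (Suc k)) w"
    by (simp add: diag_form_def w_def)
  also have "\<dots> = (t k - t (Suc k)) * cross2 (edge d v k) w"
    unfolding edge_next by (simp add: cross2_diff_left algebra_simps)
  finally have "diag_form d v t (k, Suc (Suc k)) = (t k - t (Suc k)) * cross2 (edge d v k) w" .
  moreover have "cross2 (edge d v k) w \<noteq> 0"
    unfolding w_def by (rule convex_polygon_cross2_edge[OF conv]) (use k in auto)
  ultimately have "t k = t (Suc k)" using zero by (simp add: zero_fun_def)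
  with Suc show ?case by simp
qed simp

text \<open>The closed weights that equal the \<open>k\<close>-th unit vector below \<open>d - 2\<close>: the last two entries are
  the Cramer coefficients of \<open>-e\<^sub>k\<close> in the basis \<open>e\<^sub>d\<^sub>-\<^sub>2, e\<^sub>d\<^sub>-\<^sub>1\<close>.\<close>
definition basis_weight :: "nat \<Rightarrow> (nat \<Rightarrow> 'a::linordered_field \<times> 'a) \<Rightarrow> nat \<Rightarrow> nat \<Rightarrow> 'a" where
  "basis_weight d v k m =
     (if m = k then 1
      else if m = d - 2 then - cross2 (edge d v k) (edge d v (d-1)) / cross2 (edge d v (d-2)) (edge d v (d-1))
      else if m = d - 1 then - cross2 (edge d v (d-2)) (edge d v k) / cross2 (edge d v (d-2)) (edge d v (d-1))
      else 0)"

lemma sum_basis_weight_low: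
  assumes "finite K" and "m < d - 2"
  shows "(\<Sum>k\<in>K. c k * basis_weight d v k m) = (if m \<in> K then c m else 0)"
proof -
  have "(\<Sum>k\<in>K. c k * basis_weight d v k m) = (\<Sum>k\<in>K. if k = m then c k else 0)"
    using assms(2) by (intro sum.cong) (auto simp: basis_weight_def)
  then show ?thesis using assms(1) by (simp add: sum.delta')
qed

lemma closed_basis_weight:
  assumes conv: "convex_polygon d v" and d4: "d \<ge> 4" and k: "k < d - 2"
  shows "closed_weights d v (basis_weight d v k)"
proof -
  let ?p = "edge d v (d-2)" and ?q = "edge d v (d-1)" and ?r = "edge d v k"
  have "Suc (d-2) = d-1" using d4 by simp
  then have "cross2 ?p ?q \<noteq> 0"
    using convex_polygon_cross2_consecutive_edges[OF conv, of "d-2"] d4 by simp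
  from planar_cramer[OF this, of ?r]
  have "?r + scale2 (- cross2 ?r ?q / cross2 ?p ?q) ?p + scale2 (- cross2 ?p ?r / cross2 ?p ?q) ?q = 0"
    by (simp add: scale2_def prod_eq_iff)
  moreover have ne: "k \<noteq> d-2" "k \<noteq> d-1" "d-2 \<noteq> d-1" using k d4 by auto
  have bw: "basis_weight d v k k = 1"
      "basis_weight d v k (d-2) = - cross2 ?r ?q / cross2 ?p ?q"
      "basis_weight d v k (d-1) = - cross2 ?p ?r / cross2 ?p ?q"
    using k by (auto simp: basis_weight_def)
  from ne bw have "edge_sum d v (basis_weight d v k) {k, d-2, d-1}
      = ?r + scale2 (- cross2 ?r ?q / cross2 ?p ?q) ?p + scale2 (- cross2 ?p ?r / cross2 ?p ?q) ?q"
    by (simp add: edge_sum_def)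
  moreover have "edge_sum d v (basis_weight d v k) {..<d} = edge_sum d v (basis_weight d v k) {k, d-2, d-1}"
    using k by (intro edge_sum_mono_neutral) (auto simp: basis_weight_def)
  ultimately show ?thesis by (simp add: closed_weights_def)
qed

lemma closed_weights_eq_0:
  assumes conv: "convex_polygon d v" and d4: "d \<ge> 4" and closed: "closed_weights d v t"
    and low: "\<And>m. m < d - 2 \<Longrightarrow> t m = 0" and m: "m < d"
  shows "t m = 0"
proof -
  have "Suc (d-2) = d-1" using d4 by simp
  then have "cross2 (edge d v (d-2)) (edge d v (d-1)) \<noteq> 0"
    using convex_polygon_cross2_consecutive_edges[OF conv, of "d-2"] d4 by simp
  moreover have "edge_sum d v t {..<d} = edge_sum d v t {d-2, d-1}"
    using low d4 by (intro edge_sum_mono_neutral) auto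
  then have "scale2 (t (d-2)) (edge d v (d-2)) + scale2 (t (d-1)) (edge d v (d-1)) = 0"
    using closed d4 by (simp add: closed_weights_def edge_sum_def)
  ultimately have "t (d-2) = 0" "t (d-1) = 0" by (rule scale2_independent)+
  moreover have "m < d - 2 \<or> m = d - 2 \<or> m = d - 1" using m by linarith
  ultimately show ?thesis using low by auto
qed

lemma diag_form_decomposition:
  assumes conv: "convex_polygon d v" and d4: "d \<ge> 4" and closed: "closed_weights d v t"
  shows "diag_form d v t = (\<Sum>k\<in>{1..d-3}. fscale (t k - t 0) (diag_form d v (basis_weight d v k)))"
proof -
  define s where "s = (\<lambda>m. \<Sum>k\<in>{1..d-3}. (t k - t 0) * basis_weight d v k m)"
  define r where "r m = (t m - t 0) - s m" for m
  have "edge_sum d v s {..<d} = 0"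
    using closed_basis_weight[OF conv d4] unfolding s_def edge_sum_lincomb
    by (intro sum.neutral) (auto simp: closed_weights_def)
  moreover have "edge_sum d v r {..<d}
      = edge_sum d v t {..<d} - edge_sum d v (\<lambda>_. t 0) {..<d} - edge_sum d v s {..<d}"
    unfolding r_def edge_sum_diff[of d v "\<lambda>m. t m - t 0" s] edge_sum_diff[of d v t "\<lambda>_. t 0"] ..
  ultimately have "closed_weights d v r"
    using closed closed_weights_const[of d v "t 0"] d4 by (simp add: closed_weights_def)
  moreover have "r m = 0" if "m < d - 2" for m
    using that by (cases "m = 0") (auto simp: r_def s_def sum_basis_weight_low)
  ultimately have "r m = 0" if "m < d" for m
    using closed_weights_eq_0[OF conv d4] that by blast
  then have "diag_form d v (\<lambda>m. t m - t 0) = diag_form d v s"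
    by (intro diag_form_cong) (simp add: r_def)
  then show ?thesis
    by (simp add: diag_form_shift s_def diag_form_lincomb)
qed

lemma diag_form_basis_lincomb_eq_0:
  assumes conv: "convex_polygon d v" and d4: "d \<ge> 4" and K: "K \<subseteq> {1..d-3}"
    and zero: "(\<Sum>k\<in>K. fscale (c k) (diag_form d v (basis_weight d v k))) = 0"
    and k: "k \<in> K"
  shows "c k = 0"
proof -
  define s where "s = (\<lambda>m. \<Sum>k\<in>K. c k * basis_weight d v k m)"
  have fin: "finite K" using K finite_subset by blast
  have low: "s m = (if m \<in> K then c m else 0)" if "m < d - 2" for m
    using that fin by (simp add: s_def sum_basis_weight_low)
  have "diag_form d v s = 0" using zero by (simp add: s_def diag_form_lincomb)
  moreover have "1 \<le> k \<and> k \<le> d - 3" using subsetD[OF K k] by simp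
  then have k_bounds: "0 < k" "k < d - 2" using d4 by arith+
  ultimately have "s k = s 0" by (intro diag_form_zero_imp_const[OF conv d4]) simp_all
  moreover have "0 \<notin> K" using K by auto
  ultimately show ?thesis using low[of k] low[of 0] k k_bounds by simp
qed

lemma inj_on_diag_form_basis_weight:
  assumes conv: "convex_polygon d v" and d4: "d \<ge> 4"
  shows "inj_on (\<lambda>k. diag_form d v (basis_weight d v k)) {1..d-3}"
proof (rule inj_onI, rule ccontr)
  fix k m assume k: "k \<in> {1..d-3}" and m: "m \<in> {1..d-3}" and "k \<noteq> m"
    and "diag_form d v (basis_weight d v k) = diag_form d v (basis_weight d v m)"
  then have "(\<Sum>j\<in>{k, m}. fscale (if j = k then 1 else - 1) (diag_form d v (basis_weight d v j))) = 0"
    by (simp add: fscale_def fun_eq_iff)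
  from diag_form_basis_lincomb_eq_0[OF conv d4 _ this, where k = k] k m
  have "(if k = k then 1 else - 1) = (0::'a)" by auto
  then show False by simp
qed

lemma independent_diag_form_basis_weight:
  assumes conv: "convex_polygon d v" and d4: "d \<ge> 4"
  shows "\<not> module.dependent fscale ((\<lambda>k. diag_form d v (basis_weight d v k)) ` {1..d-3})"
proof -
  interpret V: vector_space "fscale :: 'a \<Rightarrow> (nat \<times> nat \<Rightarrow> 'a) \<Rightarrow> _"
    by (rule vector_space_fscale)
  let ?b = "\<lambda>k. diag_form d v (basis_weight d v k)"
  show ?thesis
  proof (rule V.independent_if_scalars_zero)
    fix g x assume "(\<Sum>x\<in>?b ` {1..d-3}. fscale (g x) x) = 0" and x: "x \<in> ?b ` {1..d-3}"
    then have "(\<Sum>k\<in>{1..d-3}. fscale (g (?b k)) (?b k)) = 0"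
      unfolding sum.reindex[OF inj_on_diag_form_basis_weight[OF conv d4]] by (simp add: o_def)
    from diag_form_basis_lincomb_eq_0[OF conv d4 order_refl this] x show "g x = 0" by auto
  qed simp
qed

lemma Dspace_inter_IC2_subset_span_basis:
  assumes conv: "convex_polygon d v" and d4: "d \<ge> 4"
  shows "Dspace d \<inter> IC2 d v \<subseteq> module.span fscale ((\<lambda>k. diag_form d v (basis_weight d v k)) ` {1..d-3})"
proof
  interpret V: vector_space "fscale :: 'a \<Rightarrow> (nat \<times> nat \<Rightarrow> 'a) \<Rightarrow> _"
    by (rule vector_space_fscale)
  fix q assume "q \<in> Dspace d \<inter> IC2 d v"
  then obtain t where "closed_weights d v t" and "q = diag_form d v t"
    unfolding Dspace_inter_IC2_eq[OF conv] by blast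
  then have "q = (\<Sum>k\<in>{1..d-3}. fscale (t k - t 0) (diag_form d v (basis_weight d v k)))"
    by (simp add: diag_form_decomposition[OF conv d4])
  also have "\<dots> \<in> V.span ((\<lambda>k. diag_form d v (basis_weight d v k)) ` {1..d-3})"
    by (rule V.span_sum, rule V.span_scale, rule V.span_base) blast
  finally show "q \<in> V.span ((\<lambda>k. diag_form d v (basis_weight d v k)) ` {1..d-3})" .
qed

text \<open>Strict convexity alone suffices.\<close>
theorem lemma3p3:
  fixes d :: nat and v :: "nat \<Rightarrow> 'a::linordered_field \<times> 'a"
  assumes "d \<ge> 4"
    and "convex_polygon d v"
    and "no_three_edge_lines_concurrent d v"
  shows "vector_space.dim fscale (Dspace d \<inter> IC2 d v) = d - 3"
proof -
  interpret V: vector_space "fscale :: 'a \<Rightarrow> (nat \<times> nat \<Rightarrow> 'a) \<Rightarrow> _"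
    by (rule vector_space_fscale)
  note d4 = assms(1) and conv = assms(2)
  let ?B = "(\<lambda>k. diag_form d v (basis_weight d v k)) ` {1..d-3}"
  show ?thesis
  proof (rule V.dim_unique)
    show "?B \<subseteq> Dspace d \<inter> IC2 d v"
      using closed_basis_weight[OF conv d4] d4 by (auto simp: Dspace_inter_IC2_eq[OF conv])
    show "Dspace d \<inter> IC2 d v \<subseteq> V.span ?B"
      by (rule Dspace_inter_IC2_subset_span_basis[OF conv d4])
    show "V.independent ?B"
      by (rule independent_diag_form_basis_weight[OF conv d4])
    show "card ?B = d - 3"
      using card_image[OF inj_on_diag_form_basis_weight[OF conv d4]] by simp
  qed
qed

end
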